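(* Let $(A,\mathfrak{m}_A)$ be a local homologically bounded DG algebra with $A\not\simeq 0$, $\mathfrak{m}_A=A_+$, and $s=\operatorname{amp}(H(A))$. Let $K$ be a homologically finite DG $A$-module with $\operatorname{amp}(H(K))\leq s$, let $r\geq\sup(H(K))$ be an integer, and let $K'=\operatorname{Syz}_r(K)$. Then $\sup(H(K'))\leq s+r$ and $\inf(H(K'))\geq r$. Therefore $\operatorname{amp}(H(K'))\leq s$.
   Context: Complexes are indexed homologically; $\sup,\inf$ are the largest/smallest degrees of nonzero components and $\operatorname{amp}=\sup-\inf$, applied to homology. A DG algebra is a complex with unital, associative, graded-commutative chain map multiplication; positively graded means $A_i=0$ for $i<0$. A positively graded DG algebra is local if $H_0(A)$ is a noetherian local ring and each $H_i(A)$ is finitely generated over $H_0(A)$; here its maximal ideal $\mathfrak{m}_A$ is $A_+=\bigoplus_{i\ge1}A_i$. $A\not\simeq0$ means $H(A)\neq0$. A DG $A$-module is homologically finite if $H(K)$ is finitely generated over $H_0(A)$. Semifree: underlying graded module free over $A^\natural$ (and bounded below), semibasis = homogeneous basis. Syzygy construction: take a minimal semifree resolution $F\xrightarrow{\simeq}K$ (semibasis finite in each degree, $\partial^F(F)\subseteq\mathfrak{m}_AF$); let $\widetilde K=\tau_{\le r}(F)$ be the soft truncation ($\cdots\to0\to F_r/\operatorname{Im}\partial_{r+1}\to F_{r-1}\to\cdots$), $L$ the semifree submodule of $F$ spanned by semibasis elements of degree $\le r$, $\pi\colon L\to\widetilde K$ the composite of inclusion and the natural surjection; then $\operatorname{Syz}_r(K)=\ker\pi$.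 *)

theory Defs
  imports Main "HOL-Algebra.QuotRing" "HOL-Algebra.Ring_Divisibility"
begin

text \<open>A graded object is an ambient type together with its homogeneous components
  (an int-indexed family of sets), whose sum is direct.\<close>

definition sgnpow :: "int \<Rightarrow> 'a::ring_1" where
  "sgnpow i = (if even i then 1 else - 1)"

definition graded_group :: "(int \<Rightarrow> 'm::ab_group_add set) \<Rightarrow> bool" where
  "graded_group C \<longleftrightarrow>
     (\<forall>i. 0 \<in> C i \<and> (\<forall>x\<in>C i. \<forall>y\<in>C i. x + y \<in> C i \<and> - x \<in> C i)) \<and>
     (\<forall>(I::int set) f. finite I \<longrightarrow> (\<forall>i\<in>I. f i \<in> C i) \<longrightarrow> sum f I = 0 \<longrightarrow> (\<forall>i\<in>I. f i = 0))"

definition differential :: "(int \<Rightarrow> 'm::ab_group_add set) \<Rightarrow> ('m \<Rightarrow> 'm) \<Rightarrow> bool" where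
  "differential C d \<longleftrightarrow>
     (\<forall>i. \<forall>x\<in>C i. d x \<in> C (i - 1)) \<and>
     (\<forall>i. \<forall>x\<in>C i. \<forall>y\<in>C i. d (x + y) = d x + d y) \<and>
     (\<forall>i. \<forall>x\<in>C i. d (d x) = 0)"

definition cycles :: "(int \<Rightarrow> 'm::zero set) \<Rightarrow> ('m \<Rightarrow> 'm) \<Rightarrow> int \<Rightarrow> 'm set" where
  "cycles C d i = {x \<in> C i. d x = 0}"

definition boundaries :: "(int \<Rightarrow> 'm set) \<Rightarrow> ('m \<Rightarrow> 'm) \<Rightarrow> int \<Rightarrow> 'm set" where
  "boundaries C d i = d ` C (i + 1)"

definition homology_nonzero :: "(int \<Rightarrow> 'm::zero set) \<Rightarrow> ('m \<Rightarrow> 'm) \<Rightarrow> int \<Rightarrow> bool" where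
  "homology_nonzero C d i \<longleftrightarrow> \<not> cycles C d i \<subseteq> boundaries C d i"

text \<open>The set of degrees in which the homology is nonzero; \<open>sup\<close>, \<open>inf\<close>, \<open>amp\<close>
  of \<open>H\<close> are the max, min and their difference of this set.\<close>

definition hom_degrees :: "(int \<Rightarrow> 'm::zero set) \<Rightarrow> ('m \<Rightarrow> 'm) \<Rightarrow> int set" where
  "hom_degrees C d = {i. homology_nonzero C d i}"

definition dg_algebra :: "(int \<Rightarrow> 'a::ring_1 set) \<Rightarrow> ('a \<Rightarrow> 'a) \<Rightarrow> bool" where
  "dg_algebra A d \<longleftrightarrow>
     graded_group A \<and> differential A d \<and>
     1 \<in> A 0 \<and>
     (\<forall>i j. \<forall>a\<in>A i. \<forall>b\<in>A j. a * b \<in> A (i + j)) \<and>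
     (\<forall>i j. \<forall>a\<in>A i. \<forall>b\<in>A j. d (a * b) = d a * b + sgnpow i * (a * d b)) \<and>
     (\<forall>i j. \<forall>a\<in>A i. \<forall>b\<in>A j. a * b = sgnpow (i * j) * (b * a))"

definition positively_graded :: "(int \<Rightarrow> 'a::zero set) \<Rightarrow> bool" where
  "positively_graded A \<longleftrightarrow> (\<forall>i < 0. A i = {0})"

text \<open>The ring \<open>A_0\<close> (as a HOL-Algebra ring record) and \<open>H_0(A) = A_0 / \<partial>(A_1)\<close>
  (for positively graded \<open>A\<close> every element of \<open>A_0\<close> is a cycle).\<close>

definition deg0_ring :: "(int \<Rightarrow> 'a::ring_1 set) \<Rightarrow> 'a ring" where
  "deg0_ring A = \<lparr>carrier = A 0, monoid.mult = (*), one = 1, zero = 0, add = (+)\<rparr>"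

definition H0_ring :: "(int \<Rightarrow> 'a::ring_1 set) \<Rightarrow> ('a \<Rightarrow> 'a) \<Rightarrow> 'a set ring" where
  "H0_ring A d = deg0_ring A Quot (d ` A 1)"

definition local_noetherian_ring :: "('b, 'c) ring_scheme \<Rightarrow> bool" where
  "local_noetherian_ring R \<longleftrightarrow> cring R \<and> noetherian_ring R \<and> (\<exists>!M. maximalideal M R)"

definition dg_module ::
  "(int \<Rightarrow> 'a::ring_1 set) \<Rightarrow> ('a \<Rightarrow> 'a) \<Rightarrow> (int \<Rightarrow> 'm::ab_group_add set) \<Rightarrow> ('m \<Rightarrow> 'm)
     \<Rightarrow> ('a \<Rightarrow> 'm \<Rightarrow> 'm) \<Rightarrow> bool" where
  "dg_module A d M dM sm \<longleftrightarrow>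
     graded_group M \<and> differential M dM \<and>
     (\<forall>i j. \<forall>a\<in>A i. \<forall>x\<in>M j. sm a x \<in> M (i + j)) \<and>
     (\<forall>i j. \<forall>a\<in>A i. \<forall>b\<in>A i. \<forall>x\<in>M j. sm (a + b) x = sm a x + sm b x) \<and>
     (\<forall>i j. \<forall>a\<in>A i. \<forall>x\<in>M j. \<forall>y\<in>M j. sm a (x + y) = sm a x + sm a y) \<and>
     (\<forall>i j k. \<forall>a\<in>A i. \<forall>b\<in>A j. \<forall>x\<in>M k. sm (a * b) x = sm a (sm b x)) \<and>
     (\<forall>j. \<forall>x\<in>M j. sm 1 x = x) \<and>
     (\<forall>i j. \<forall>a\<in>A i. \<forall>x\<in>M j. dM (sm a x) = sm (d a) x + (if even i then sm a (dM x) else - sm a (dM x)))"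

text \<open>\<open>H_i(M)\<close> is finitely generated over \<open>H_0(A)\<close>: finitely many cycles whose
  \<open>A_0\<close>-linear combinations represent every homology class.\<close>

definition hom_fg ::
  "(int \<Rightarrow> 'a set) \<Rightarrow> (int \<Rightarrow> 'm::{ab_group_add} set) \<Rightarrow> ('m \<Rightarrow> 'm) \<Rightarrow> ('a \<Rightarrow> 'm \<Rightarrow> 'm) \<Rightarrow> int \<Rightarrow> bool" where
  "hom_fg A M dM sm i \<longleftrightarrow>
     (\<exists>G. finite G \<and> G \<subseteq> cycles M dM i \<and>
        (\<forall>z\<in>cycles M dM i. \<exists>c. (\<forall>g\<in>G. c g \<in> A 0) \<and>
            z - (\<Sum>g\<in>G. sm (c g) g) \<in> boundaries M dM i))"

definition local_dg_algebra :: "(int \<Rightarrow> 'a::ring_1 set) \<Rightarrow> ('a \<Rightarrow> 'a) \<Rightarrow> bool" where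
  "local_dg_algebra A d \<longleftrightarrow>
     dg_algebra A d \<and> positively_graded A \<and> local_noetherian_ring (H0_ring A d) \<and>
     (\<forall>i. hom_fg A A d (*) i)"

text \<open>Homologically finite: \<open>H(M)\<close> finitely generated over \<open>H_0(A)\<close>; since
  \<open>H_0(A)\<close> sits in degree 0, this means only finitely many \<open>H_i(M)\<close> are nonzero and
  each is finitely generated.\<close>

definition homologically_finite ::
  "(int \<Rightarrow> 'a set) \<Rightarrow> (int \<Rightarrow> 'm::ab_group_add set) \<Rightarrow> ('m \<Rightarrow> 'm) \<Rightarrow> ('a \<Rightarrow> 'm \<Rightarrow> 'm) \<Rightarrow> bool" where
  "homologically_finite A M dM sm \<longleftrightarrow> finite (hom_degrees M dM) \<and> (\<forall>i. hom_fg A M dM sm i)"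

definition quasi_iso ::
  "(int \<Rightarrow> 'a set) \<Rightarrow> (int \<Rightarrow> 'f::ab_group_add set) \<Rightarrow> ('f \<Rightarrow> 'f) \<Rightarrow> ('a \<Rightarrow> 'f \<Rightarrow> 'f)
    \<Rightarrow> (int \<Rightarrow> 'm::ab_group_add set) \<Rightarrow> ('m \<Rightarrow> 'm) \<Rightarrow> ('a \<Rightarrow> 'm \<Rightarrow> 'm) \<Rightarrow> ('f \<Rightarrow> 'm) \<Rightarrow> bool" where
  "quasi_iso A F dF smF M dM smM \<phi> \<longleftrightarrow>
     (\<forall>i. \<forall>x\<in>F i. \<phi> x \<in> M i) \<and>
     (\<forall>i. \<forall>x\<in>F i. \<forall>y\<in>F i. \<phi> (x + y) = \<phi> x + \<phi> y) \<and>
     (\<forall>i j. \<forall>a\<in>A i. \<forall>x\<in>F j. \<phi> (smF a x) = smM a (\<phi> x)) \<and>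
     (\<forall>i. \<forall>x\<in>F i. \<phi> (dF x) = dM (\<phi> x)) \<and>
     (\<forall>i. \<forall>x\<in>cycles F dF i. \<phi> x \<in> boundaries M dM i \<longrightarrow> x \<in> boundaries F dF i) \<and>
     (\<forall>i. \<forall>y\<in>cycles M dM i. \<exists>x\<in>cycles F dF i. \<phi> x - y \<in> boundaries M dM i)"

text \<open>\<open>E\<close> with degree function \<open>dg\<close> is a semibasis of \<open>F\<close>: the underlying graded
  module of \<open>F\<close> is free over \<open>A^\<natural>\<close> on the homogeneous basis \<open>E\<close>.\<close>

definition semibasis ::
  "(int \<Rightarrow> 'a::zero set) \<Rightarrow> (int \<Rightarrow> 'f::ab_group_add set) \<Rightarrow> ('a \<Rightarrow> 'f \<Rightarrow> 'f) \<Rightarrow> 'f set \<Rightarrow> ('f \<Rightarrow> int) \<Rightarrow> bool" where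
  "semibasis A F sm E dg \<longleftrightarrow>
     (\<forall>e\<in>E. e \<in> F (dg e)) \<and>
     (\<forall>n. \<forall>x\<in>F n. \<exists>!c. (\<forall>e. c e \<in> A (n - dg e)) \<and> (\<forall>e. e \<notin> E \<longrightarrow> c e = 0) \<and>
           finite {e. c e \<noteq> 0} \<and> x = (\<Sum>e\<in>{e. c e \<noteq> 0}. sm (c e) e))"

definition minimal_semifree ::
  "(int \<Rightarrow> 'a::zero set) \<Rightarrow> (int \<Rightarrow> 'f::ab_group_add set) \<Rightarrow> ('f \<Rightarrow> 'f) \<Rightarrow> ('a \<Rightarrow> 'f \<Rightarrow> 'f)
     \<Rightarrow> 'f set \<Rightarrow> ('f \<Rightarrow> int) \<Rightarrow> bool" where
  "minimal_semifree A F dF sm E dg \<longleftrightarrow>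
     semibasis A F sm E dg \<and>
     (\<exists>b. \<forall>e\<in>E. b \<le> dg e) \<and>
     (\<forall>n. finite {e\<in>E. dg e = n}) \<and>
     \<comment> \<open>minimality: \<open>\<partial>(F) \<subseteq> \<frak>m_A F\<close> with \<open>\<frak>m_A = A_+\<close>\<close>
     (\<forall>n. \<forall>x\<in>F n. \<exists>(S::nat set) a k y. finite S \<and>
         (\<forall>j\<in>S. 1 \<le> k j \<and> a j \<in> A (k j) \<and> y j \<in> F (n - 1 - k j)) \<and>
         dF x = (\<Sum>j\<in>S. sm (a j) (y j)))"

text \<open>\<open>L\<close>: the semifree submodule of \<open>F\<close> spanned by the semibasis elements of degree \<open>\<le> r\<close>.\<close>

definition low_part ::
  "(int \<Rightarrow> 'a set) \<Rightarrow> ('a \<Rightarrow> 'f::ab_group_add \<Rightarrow> 'f) \<Rightarrow> 'f set \<Rightarrow> ('f \<Rightarrow> int) \<Rightarrow> int \<Rightarrow> int \<Rightarrow> 'f set" where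
  "low_part A sm E dg r n =
     {\<Sum>e\<in>S. sm (c e) e | S c. finite S \<and> S \<subseteq> {e\<in>E. dg e \<le> r} \<and> (\<forall>e\<in>S. c e \<in> A (n - dg e))}"

text \<open>\<open>\<pi> : L \<rightarrow> \<tau>_{\<le> r}(F)\<close> is zero in degrees \<open>> r\<close>, the projection
  \<open>F_r \<rightarrow> F_r / \<partial>(F_{r+1})\<close> in degree \<open>r\<close> and the identity in degrees \<open>< r\<close>.
  Hence \<open>x \<in> L_n\<close> lies in \<open>ker \<pi>\<close> iff the following holds.\<close>

definition trunc_proj_zero :: "(int \<Rightarrow> 'f::zero set) \<Rightarrow> ('f \<Rightarrow> 'f) \<Rightarrow> int \<Rightarrow> int \<Rightarrow> 'f \<Rightarrow> bool" where
  "trunc_proj_zero F dF r n x \<longleftrightarrow>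
     (if n > r then True else if n = r then x \<in> dF ` F (r + 1) else x = 0)"

definition syzygy ::
  "(int \<Rightarrow> 'a set) \<Rightarrow> (int \<Rightarrow> 'f::ab_group_add set) \<Rightarrow> ('f \<Rightarrow> 'f) \<Rightarrow> ('a \<Rightarrow> 'f \<Rightarrow> 'f)
     \<Rightarrow> 'f set \<Rightarrow> ('f \<Rightarrow> int) \<Rightarrow> int \<Rightarrow> int \<Rightarrow> 'f set" where
  "syzygy A F dF sm E dg r n = {x \<in> low_part A sm E dg r n. trunc_proj_zero F dF r n x}"

end

theory Submission
  imports Defs
begin

text \<open>Since \<open>A\<close> is positively graded and \<open>H_0(A) \<noteq> 0\<close>, \<open>inf H(A) = 0\<close>, so
  \<open>s = sup H(A)\<close> and \<open>H_j(A) = 0\<close> for \<open>j > s\<close>.  In degrees \<open>< r\<close> the syzygy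
  \<open>Syz_r(K) = ker \<pi>\<close> is zero, and in degrees \<open>> r\<close> it coincides with \<open>L\<close>.
  A cycle of \<open>L\<close> in degree \<open>i > s + r\<close> is a boundary in \<open>L\<close>: writing it in the
  semibasis, its coordinates at the basis elements of top degree \<open>m \<le> r\<close> are cycles
  of \<open>A\<close> in degree \<open>i - m > s\<close>, hence boundaries, and subtracting the corresponding
  boundary in \<open>L\<close> lowers the top degree; as the degrees of the semibasis are bounded
  below, this terminates.  Hence \<open>H(Syz_r(K))\<close> lives in degrees \<open>[r, s + r]\<close>.\<close>

lemma differential_zero:
  assumes "graded_group C" "differential C d"
  shows "d 0 = 0"
proof -
  have "0 \<in> C 0" using assms(1) unfolding graded_group_def by blast
  then have "d (0 + 0) = d 0 + d 0" using assms(2) unfolding differential_def by blast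
  then show ?thesis by simp
qed

lemma hom_degrees_nonneg:
  assumes C: "graded_group C" "differential C d" "positively_graded C"
    and i: "i \<in> hom_degrees C d"
  shows "0 \<le> i"
proof (rule ccontr)
  assume "\<not> 0 \<le> i"
  then have "cycles C d i \<subseteq> {0}"
    using C(3) unfolding cycles_def positively_graded_def by auto
  moreover have "0 \<in> boundaries C d i"
    using C differential_zero[OF C(1,2)] unfolding boundaries_def graded_group_def by force
  ultimately show False
    using i unfolding hom_degrees_def homology_nonzero_def by auto
qed

lemma cycle_is_boundary:
  assumes "j \<notin> hom_degrees C d" "z \<in> C j" "d z = 0"
  shows "\<exists>b\<in>C (j + 1). d b = z"
  using assms unfolding hom_degrees_def homology_nonzero_def cycles_def boundaries_def by auto

text \<open>If \<open>H_0(A) = 0\<close>, then \<open>A_0 = \<partial>(A_1)\<close>, so \<open>1\<close> and \<open>0\<close> have the same class in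
  \<open>H_0(A)\<close>: the zero ring has no maximal ideal.\<close>

lemma zero_in_hom_degrees:
  assumes A: "local_dg_algebra A d"
  shows "0 \<in> hom_degrees A d"
proof (rule ccontr)
  assume H0: "0 \<notin> hom_degrees A d"
  have dga: "dg_algebra A d" and pos: "positively_graded A"
    and lnr: "local_noetherian_ring (H0_ring A d)"
    using A unfolding local_dg_algebra_def by auto
  have gg: "graded_group A" and diff: "differential A d" and one: "1 \<in> A 0"
    using dga unfolding dg_algebra_def by auto
  have A0_closed: "x + y \<in> A 0" "- x \<in> A 0" if "x \<in> A 0" "y \<in> A 0" for x y
    using gg that unfolding graded_group_def by blast+
  have d_deg: "d ` A 1 \<subseteq> A 0" "d ` A 0 \<subseteq> A (- 1)"
    using diff unfolding differential_def by force+
  then have "cycles A d 0 = A 0"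
    using pos unfolding cycles_def positively_graded_def by auto
  then have I: "d ` A 1 = A 0"
    using H0 d_deg(1) unfolding hom_degrees_def homology_nonzero_def boundaries_def by auto
  have "d ` A 1 +>\<^bsub>deg0_ring A\<^esub> 1 = d ` A 1"
  proof -
    have "x - 1 \<in> A 0" if "x \<in> A 0" for x
      using A0_closed[OF that A0_closed(2)[OF one one]] by simp
    then show ?thesis
      unfolding a_r_coset_def' I using A0_closed one
      by (force simp: deg0_ring_def intro: bexI[of _ "_ - 1"])
  qed
  then have one_eq_zero: "\<one>\<^bsub>H0_ring A d\<^esub> = \<zero>\<^bsub>H0_ring A d\<^esub>"
    unfolding H0_ring_def FactRing_def by (simp add: deg0_ring_def)
  obtain M where M: "maximalideal M (H0_ring A d)"
    using lnr unfolding local_noetherian_ring_def by blast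
  then have M_ideal: "ideal M (H0_ring A d)" by (rule maximalideal.axioms(1))
  then have "\<zero>\<^bsub>H0_ring A d\<^esub> \<in> M"
    by (simp add: additive_subgroup.zero_closed ideal.axioms(1))
  then have "M = carrier (H0_ring A d)"
    using ideal.one_imp_carrier[OF M_ideal] one_eq_zero by simp
  then show False using maximalideal.I_notcarr[OF M] by simp
qed

lemma local_dg_algebra_Min_hom_degrees:
  assumes A: "local_dg_algebra A d" and fin: "finite (hom_degrees A d)"
  shows "Min (hom_degrees A d) = 0"
proof (rule Min_eqI[OF fin _ zero_in_hom_degrees[OF A]])
  have "graded_group A" "differential A d" "positively_graded A"
    using A unfolding local_dg_algebra_def dg_algebra_def by auto
  then show "0 \<le> i" if "i \<in> hom_degrees A d" for i
    using hom_degrees_nonneg that by blast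
qed

locale semifree_dg_module =
  fixes A :: "int \<Rightarrow> 'a::ring_1 set" and d :: "'a \<Rightarrow> 'a"
    and F :: "int \<Rightarrow> 'f::ab_group_add set" and dF :: "'f \<Rightarrow> 'f" and sm :: "'a \<Rightarrow> 'f \<Rightarrow> 'f"
    and E :: "'f set" and dg :: "'f \<Rightarrow> int"
  assumes A_dga: "dg_algebra A d" and A_pos: "positively_graded A"
    and F_dgm: "dg_module A d F dF sm" and E_semibasis: "semibasis A F sm E dg"
begin

lemma A_graded_group: "graded_group A" and A_differential: "differential A d"
  using A_dga unfolding dg_algebra_def by auto

lemma F_graded_group: "graded_group F" and F_differential: "differential F dF"
  using F_dgm unfolding dg_module_def by auto

lemma A_zero: "0 \<in> A i"
  using A_graded_group unfolding graded_group_def by blast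

lemma A_add: "a \<in> A i \<Longrightarrow> b \<in> A i \<Longrightarrow> a + b \<in> A i"
  using A_graded_group unfolding graded_group_def by blast

lemma A_one: "1 \<in> A 0"
  using A_dga unfolding dg_algebra_def by (elim conjE)

lemma A_mult: "a \<in> A i \<Longrightarrow> b \<in> A j \<Longrightarrow> k = i + j \<Longrightarrow> a * b \<in> A k"
  using A_dga unfolding dg_algebra_def by (elim conjE) metis

lemma A_negative: "i < 0 \<Longrightarrow> a \<in> A i \<Longrightarrow> a = 0"
  using A_pos unfolding positively_graded_def by blast

lemma d_in: "a \<in> A i \<Longrightarrow> d a \<in> A (i - 1)"
  using A_differential unfolding differential_def by blast

lemma d_zero: "d 0 = 0"
  using differential_zero[OF A_graded_group A_differential] .

lemma F_zero: "0 \<in> F i"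
  using F_graded_group unfolding graded_group_def by blast

lemma F_add: "x \<in> F i \<Longrightarrow> y \<in> F i \<Longrightarrow> x + y \<in> F i"
  using F_graded_group unfolding graded_group_def by blast

lemma F_uminus: "x \<in> F i \<Longrightarrow> - x \<in> F i"
  using F_graded_group unfolding graded_group_def by blast

lemma F_diff: "x \<in> F i \<Longrightarrow> y \<in> F i \<Longrightarrow> x - y \<in> F i"
  unfolding diff_conv_add_uminus by (intro F_add F_uminus)

lemma F_sum: "finite S \<Longrightarrow> (\<And>s. s \<in> S \<Longrightarrow> g s \<in> F n) \<Longrightarrow> sum g S \<in> F n"
  by (induction S rule: finite_induct) (auto intro: F_zero F_add)

lemma dF_in: "x \<in> F i \<Longrightarrow> dF x \<in> F (i - 1)"
  using F_differential unfolding differential_def by blast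

lemma dF_add: "x \<in> F i \<Longrightarrow> y \<in> F i \<Longrightarrow> dF (x + y) = dF x + dF y"
  using F_differential unfolding differential_def by blast

lemma dF_dF: "x \<in> F i \<Longrightarrow> dF (dF x) = 0"
  using F_differential unfolding differential_def by blast

lemma dF_zero: "dF 0 = 0"
  using differential_zero[OF F_graded_group F_differential] .

lemma dF_uminus:
  assumes "x \<in> F i" shows "dF (- x) = - dF x"
proof -
  have "dF x + dF (- x) = 0"
    using dF_add[OF assms F_uminus[OF assms]] dF_zero by simp
  then show ?thesis by (simp add: add.inverse_unique)
qed

lemma dF_diff:
  assumes "x \<in> F i" "y \<in> F i" shows "dF (x - y) = dF x - dF y"
  using dF_add[OF assms(1) F_uminus[OF assms(2)]] dF_uminus[OF assms(2)] by simp

lemma dF_sum: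
  "finite S \<Longrightarrow> (\<And>s. s \<in> S \<Longrightarrow> g s \<in> F n) \<Longrightarrow> dF (sum g S) = (\<Sum>s\<in>S. dF (g s))"
  by (induction S rule: finite_induct) (simp_all add: dF_zero dF_add[OF _ F_sum, of _ n])

lemma sm_in: "a \<in> A i \<Longrightarrow> x \<in> F j \<Longrightarrow> k = i + j \<Longrightarrow> sm a x \<in> F k"
  using F_dgm unfolding dg_module_def by (elim conjE) metis

lemma sm_add_left: "a \<in> A i \<Longrightarrow> b \<in> A i \<Longrightarrow> x \<in> F j \<Longrightarrow> sm (a + b) x = sm a x + sm b x"
  using F_dgm unfolding dg_module_def by (elim conjE) metis

lemma sm_add_right: "a \<in> A i \<Longrightarrow> x \<in> F j \<Longrightarrow> y \<in> F j \<Longrightarrow> sm a (x + y) = sm a x + sm a y"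
  using F_dgm unfolding dg_module_def by (elim conjE) metis

lemma sm_mult: "a \<in> A i \<Longrightarrow> b \<in> A j \<Longrightarrow> x \<in> F k \<Longrightarrow> sm (a * b) x = sm a (sm b x)"
  using F_dgm unfolding dg_module_def by (elim conjE) metis

lemma sm_one: "x \<in> F j \<Longrightarrow> sm 1 x = x"
  using F_dgm unfolding dg_module_def by (elim conjE) metis

lemma dF_sm:
  "a \<in> A i \<Longrightarrow> x \<in> F j \<Longrightarrow>
     dF (sm a x) = sm (d a) x + (if even i then sm a (dF x) else - sm a (dF x))"
  using F_dgm unfolding dg_module_def by (elim conjE) metis

lemma sm_zero_left: assumes "x \<in> F j" shows "sm 0 x = 0"
  using sm_add_left[OF A_zero A_zero assms] by simp

lemma sm_zero_right: assumes "a \<in> A i" shows "sm a 0 = 0"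
  using sm_add_right[OF assms F_zero F_zero] by simp

lemma sm_sum:
  "finite S \<Longrightarrow> a \<in> A i \<Longrightarrow> (\<And>s. s \<in> S \<Longrightarrow> g s \<in> F n) \<Longrightarrow>
     sm a (sum g S) = (\<Sum>s\<in>S. sm a (g s))"
  by (induction S rule: finite_induct) (simp_all add: sm_zero_right sm_add_right[OF _ _ F_sum, of a i _ n])

lemma basis_in: "e \<in> E \<Longrightarrow> e \<in> F (dg e)"
  using E_semibasis unfolding semibasis_def by blast

lemma sm_zero_basis: "e \<in> E \<Longrightarrow> sm 0 e = 0"
  using sm_zero_left[OF basis_in] .

text \<open>\<open>coord n x\<close> is meaningful only for \<open>x \<in> F n\<close> (the degree fixes the graded
  pieces \<open>A (n - dg e)\<close> the coefficients live in); otherwise the \<open>THE\<close> is unspecified.\<close>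

definition is_coord :: "int \<Rightarrow> 'f \<Rightarrow> ('f \<Rightarrow> 'a) \<Rightarrow> bool" where
  "is_coord n x c \<longleftrightarrow> (\<forall>e. c e \<in> A (n - dg e)) \<and> (\<forall>e. e \<notin> E \<longrightarrow> c e = 0) \<and>
     finite {e. c e \<noteq> 0} \<and> x = (\<Sum>e\<in>{e. c e \<noteq> 0}. sm (c e) e)"

definition coord :: "int \<Rightarrow> 'f \<Rightarrow> 'f \<Rightarrow> 'a" where
  "coord n x = (THE c. is_coord n x c)"

definition basis_support :: "int \<Rightarrow> 'f \<Rightarrow> 'f set" where
  "basis_support n x = {e. coord n x e \<noteq> 0}"

lemma ex1_is_coord: "x \<in> F n \<Longrightarrow> \<exists>!c. is_coord n x c"
  using E_semibasis unfolding semibasis_def is_coord_def by blast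

lemma is_coord_coord: "x \<in> F n \<Longrightarrow> is_coord n x (coord n x)"
  unfolding coord_def by (rule theI'[OF ex1_is_coord])

lemma coord_eqI: "x \<in> F n \<Longrightarrow> is_coord n x c \<Longrightarrow> coord n x = c"
  unfolding coord_def by (rule the1_equality[OF ex1_is_coord])

lemma
  assumes "x \<in> F n"
  shows coord_in: "coord n x e \<in> A (n - dg e)"
    and basis_support_subset: "basis_support n x \<subseteq> E"
    and finite_basis_support: "finite (basis_support n x)"
    and coord_expansion: "x = (\<Sum>e\<in>basis_support n x. sm (coord n x e) e)"
  using is_coord_coord[OF assms] unfolding is_coord_def basis_support_def by auto

lemma coord_expansion_superset:
  assumes x: "x \<in> F n" and U: "finite U" "U \<subseteq> E" "basis_support n x \<subseteq> U"
  shows "x = (\<Sum>e\<in>U. sm (coord n x e) e)"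
proof -
  have "x = (\<Sum>e\<in>basis_support n x. sm (coord n x e) e)" by (rule coord_expansion[OF x])
  also have "\<dots> = (\<Sum>e\<in>U. sm (coord n x e) e)"
    using U by (intro sum.mono_neutral_left) (auto simp: basis_support_def intro!: sm_zero_basis)
  finally show ?thesis .
qed

lemma coord_above_degree: "x \<in> F n \<Longrightarrow> n < dg e \<Longrightarrow> coord n x e = 0"
  using coord_in A_negative by force

lemma
  assumes S: "finite S" "S \<subseteq> E" and c: "\<And>e. e \<in> S \<Longrightarrow> c e \<in> A (n - dg e)"
  shows lincomb_in: "(\<Sum>e\<in>S. sm (c e) e) \<in> F n"
    and coord_lincomb: "coord n (\<Sum>e\<in>S. sm (c e) e) e' = (if e' \<in> S then c e' else 0)"
proof -
  show in_F: "(\<Sum>e\<in>S. sm (c e) e) \<in> F n"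
    using S c basis_in by (intro F_sum sm_in) auto
  define c' where "c' e = (if e \<in> S then c e else 0)" for e
  have support: "{e. c' e \<noteq> 0} = {e\<in>S. c e \<noteq> 0}" unfolding c'_def by auto
  have "(\<Sum>e\<in>S. sm (c e) e) = (\<Sum>e\<in>{e\<in>S. c e \<noteq> 0}. sm (c e) e)"
    using S by (intro sum.mono_neutral_right) (auto intro!: sm_zero_basis)
  also have "\<dots> = (\<Sum>e\<in>{e. c' e \<noteq> 0}. sm (c' e) e)"
    unfolding support by (rule sum.cong) (auto simp: c'_def)
  finally have "is_coord n (\<Sum>e\<in>S. sm (c e) e) c'"
    unfolding is_coord_def using S c A_zero support by (auto simp: c'_def)
  then show "coord n (\<Sum>e\<in>S. sm (c e) e) e' = (if e' \<in> S then c e' else 0)"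
    using coord_eqI[OF in_F] by (simp add: c'_def)
qed

lemma coord_zero: "coord n 0 e = 0"
  using coord_lincomb[of "{}" "\<lambda>_. 0" n e] by simp

lemma coord_basis: "e \<in> E \<Longrightarrow> coord (dg e) e e' = (if e' = e then 1 else 0)"
  using coord_lincomb[of "{e}" "\<lambda>_. 1" "dg e" e'] A_one sm_one[OF basis_in] by auto

lemma coord_add:
  assumes x: "x \<in> F n" and y: "y \<in> F n"
  shows "coord n (x + y) e = coord n x e + coord n y e"
proof -
  define U where "U = basis_support n x \<union> basis_support n y"
  have U: "finite U" "U \<subseteq> E"
    unfolding U_def using x y by (auto dest: basis_support_subset simp: finite_basis_support)
  have c: "coord n x e + coord n y e \<in> A (n - dg e)" for e
    using coord_in[OF x] coord_in[OF y] by (rule A_add)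
  have "x + y = (\<Sum>e\<in>U. sm (coord n x e) e) + (\<Sum>e\<in>U. sm (coord n y e) e)"
    using coord_expansion_superset[OF x U] coord_expansion_superset[OF y U] U_def by auto
  also have "\<dots> = (\<Sum>e\<in>U. sm (coord n x e + coord n y e) e)"
    unfolding sum.distrib[symmetric] using U
    by (intro sum.cong refl) (subst sm_add_left[OF coord_in[OF x] coord_in[OF y] basis_in]; auto)
  finally have "coord n (x + y) e = (if e \<in> U then coord n x e + coord n y e else 0)"
    using coord_lincomb[OF U c] by simp
  then show ?thesis unfolding U_def basis_support_def by auto
qed

lemma coord_uminus:
  assumes "x \<in> F n" shows "coord n (- x) e = - coord n x e"
proof -
  have "coord n x e + coord n (- x) e = 0"
    using coord_add[OF assms F_uminus[OF assms]] coord_zero by simp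
  then show ?thesis by (simp add: add.inverse_unique)
qed

lemma coord_diff: "x \<in> F n \<Longrightarrow> y \<in> F n \<Longrightarrow> coord n (x - y) e = coord n x e - coord n y e"
  using coord_add[OF _ F_uminus, of x n y e] coord_uminus[of y n e] by simp

lemma coord_sum:
  "finite S \<Longrightarrow> (\<And>s. s \<in> S \<Longrightarrow> g s \<in> F n) \<Longrightarrow> coord n (sum g S) e = (\<Sum>s\<in>S. coord n (g s) e)"
  by (induction S rule: finite_induct) (simp_all add: coord_zero coord_add[OF _ F_sum, of _ n])

lemma coord_sm:
  assumes a: "a \<in> A i" and x: "x \<in> F j"
  shows "coord (i + j) (sm a x) e = a * coord j x e"
proof -
  define S where "S = basis_support j x"
  have S: "finite S" "S \<subseteq> E"
    unfolding S_def using x by (auto dest: basis_support_subset simp: finite_basis_support)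
  have c: "a * coord j x e \<in> A (i + j - dg e)" for e
    by (rule A_mult[OF a coord_in[OF x]]) simp
  have "sm a x = sm a (\<Sum>e\<in>S. sm (coord j x e) e)"
    using coord_expansion[OF x] S_def by simp
  also have "\<dots> = (\<Sum>e\<in>S. sm a (sm (coord j x e) e))"
    using S basis_in coord_in[OF x] by (intro sm_sum[OF S(1) a]) (auto intro!: sm_in)
  also have "\<dots> = (\<Sum>e\<in>S. sm (a * coord j x e) e)"
    using S by (intro sum.cong refl) (subst sm_mult[OF a coord_in[OF x] basis_in]; auto)
  finally have "coord (i + j) (sm a x) e = (if e \<in> S then a * coord j x e else 0)"
    using coord_lincomb[OF S c] by simp
  then show ?thesis unfolding S_def basis_support_def by auto
qed

text \<open>Since \<open>A\<close> is positively graded, \<open>\<partial>e\<close> only involves basis elements of degree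
  \<open>< dg e\<close>; so the coordinates of \<open>\<partial>x\<close> at basis elements of top degree are
  the differentials of those of \<open>x\<close>.\<close>

lemma coord_dF_sm_basis:
  assumes a: "a \<in> A (n - dg e)" and e: "e \<in> E" and le: "dg e \<le> dg e'"
  shows "coord (n - 1) (dF (sm a e)) e' = (if e' = e then d a else 0)"
proof -
  have eF: "e \<in> F (dg e)" by (rule basis_in[OF e])
  have deF: "dF e \<in> F (dg e - 1)" by (rule dF_in[OF eF])
  have da: "d a \<in> A (n - dg e - 1)" by (rule d_in[OF a])
  have in_F: "sm (d a) e \<in> F (n - 1)" "sm a (dF e) \<in> F (n - 1)"
    using sm_in[OF da eF] sm_in[OF a deF] by simp_all
  define t where "t = (if even (n - dg e) then sm a (dF e) else - sm a (dF e))"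
  have "coord (n - 1) (sm a (dF e)) e' = 0"
    using coord_sm[OF a deF, of e'] coord_above_degree[OF deF, of e'] le by simp
  then have "coord (n - 1) t e' = 0" "t \<in> F (n - 1)"
    unfolding t_def using coord_uminus[OF in_F(2)] F_uminus[OF in_F(2)] in_F(2) by simp_all
  then have "coord (n - 1) (dF (sm a e)) e' = coord (n - 1) (sm (d a) e) e'"
    using dF_sm[OF a eF] coord_add[OF in_F(1)] unfolding t_def by simp
  then show ?thesis
    using coord_sm[OF da eF, of e'] coord_basis[OF e, of e'] by simp
qed

lemma coord_dF_top:
  assumes x: "x \<in> F n" and supp: "\<forall>e\<in>basis_support n x. dg e \<le> m" and e': "m \<le> dg e'"
  shows "coord (n - 1) (dF x) e' = d (coord n x e')"
proof -
  define S where "S = basis_support n x"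
  define c where "c = coord n x"
  have S: "finite S" "S \<subseteq> E"
    unfolding S_def using x by (auto dest: basis_support_subset simp: finite_basis_support)
  have terms: "sm (c e) e \<in> F n" if "e \<in> S" for e
    unfolding c_def using that S by (intro sm_in[OF coord_in[OF x]]) (auto intro: basis_in)
  have "x = (\<Sum>e\<in>S. sm (c e) e)"
    unfolding S_def c_def by (rule coord_expansion[OF x])
  then have "dF x = (\<Sum>e\<in>S. dF (sm (c e) e))"
    using dF_sum[of S "\<lambda>e. sm (c e) e", OF S(1) terms] by simp
  then have "coord (n - 1) (dF x) e' = (\<Sum>e\<in>S. coord (n - 1) (dF (sm (c e) e)) e')"
    using coord_sum[of S "\<lambda>e. dF (sm (c e) e)", OF S(1) dF_in[OF terms]] by simp
  also have "\<dots> = (\<Sum>e\<in>S. if e' = e then d (c e) else 0)"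
    using S supp e' coord_in[OF x] unfolding S_def c_def
    by (intro sum.cong refl coord_dF_sm_basis) force+
  also have "\<dots> = d (c e')"
    using S(1) d_zero unfolding S_def c_def basis_support_def by auto
  finally show ?thesis unfolding c_def .
qed

lemma top_coord_of_cycle_is_boundary:
  assumes exact: "\<forall>j>s. j \<notin> hom_degrees A d"
    and z: "z \<in> F i" "dF z = 0" and supp: "\<forall>e\<in>basis_support i z. dg e \<le> m"
    and deg: "s + m < i" and m: "dg e = m"
  shows "\<exists>b\<in>A (i + 1 - dg e). d b = coord i z e"
proof -
  have c: "coord i z e \<in> A (i - m)" using coord_in[OF z(1), of e] m by simp
  have "d (coord i z e) = coord (i - 1) (dF z) e"
    using coord_dF_top[OF z(1) supp] m by simp
  then have "d (coord i z e) = 0" using z(2) coord_zero by simp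
  moreover have "i - m \<notin> hom_degrees A d" using exact deg by simp
  ultimately have "\<exists>b\<in>A (i - m + 1). d b = coord i z e"
    using cycle_is_boundary[of "i - m" A d] c by simp
  then show ?thesis using m by (simp add: diff_add_eq)
qed

lemma cycle_top_reduction:
  assumes exact: "\<forall>j>s. j \<notin> hom_degrees A d"
    and z: "z \<in> F i" "dF z = 0" and supp: "\<forall>e\<in>basis_support i z. dg e \<le> m"
    and deg: "s + m < i"
  obtains y where "y \<in> F (i + 1)" "\<forall>e\<in>basis_support (i + 1) y. dg e \<le> m"
    "\<forall>e\<in>basis_support i (z - dF y). dg e < m"
proof -
  define T where "T = {e \<in> basis_support i z. dg e = m}"
  have T: "finite T" "T \<subseteq> E"
    unfolding T_def using z(1) by (auto dest: basis_support_subset simp: finite_basis_support)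
  have "\<exists>b\<in>A (i + 1 - dg e). d b = coord i z e" if "e \<in> T" for e
    using top_coord_of_cycle_is_boundary[OF exact z supp deg] that T_def by simp
  then obtain b where b: "\<And>e. e \<in> T \<Longrightarrow> b e \<in> A (i + 1 - dg e) \<and> d (b e) = coord i z e"
    by metis
  define y where "y = (\<Sum>e\<in>T. sm (b e) e)"
  have y: "y \<in> F (i + 1)" unfolding y_def using b by (intro lincomb_in[OF T]) blast
  have coord_y: "coord (i + 1) y e = (if e \<in> T then b e else 0)" for e
    unfolding y_def using b by (intro coord_lincomb[OF T]) blast
  have supp_y: "\<forall>e\<in>basis_support (i + 1) y. dg e \<le> m"
    using coord_y T_def basis_support_def by auto
  have "dg e < m" if e: "e \<in> basis_support i (z - dF y)" for e
  proof (rule ccontr)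
    assume "\<not> dg e < m"
    then have "coord i (dF y) e = d (coord (i + 1) y e)"
      using coord_dF_top[OF y supp_y] by simp
    then have "coord i (z - dF y) e = coord i z e - d (coord (i + 1) y e)"
      using coord_diff[OF z(1)] dF_in[OF y] by simp
    also have "\<dots> = 0"
    proof (cases "e \<in> T")
      case True
      then show ?thesis using b coord_y by simp
    next
      case False
      then have "coord i z e = 0"
        using supp \<open>\<not> dg e < m\<close> unfolding T_def basis_support_def by force
      then show ?thesis using False coord_y d_zero by simp
    qed
    finally show False using e unfolding basis_support_def by simp
  qed
  then show ?thesis using that y supp_y by blast
qed

lemma low_cycle_is_low_boundary:
  assumes exact: "\<forall>j>s. j \<notin> hom_degrees A d" and lb: "\<forall>e\<in>E. lb \<le> dg e"
  shows "z \<in> F i \<Longrightarrow> dF z = 0 \<Longrightarrow> \<forall>e\<in>basis_support i z. dg e \<le> m \<Longrightarrow> s + m < i \<Longrightarrow>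
    \<exists>w\<in>F (i + 1). (\<forall>e\<in>basis_support (i + 1) w. dg e \<le> m) \<and> dF w = z"
proof (induction "nat (m - lb + 1)" arbitrary: m z)
  case 0
  have "lb \<le> dg e" "dg e \<le> m" if "e \<in> basis_support i z" for e
    using that lb basis_support_subset[OF \<open>z \<in> F i\<close>] 0 by auto
  moreover have "m < lb" using "0.hyps" by simp
  ultimately have "basis_support i z = {}" by fastforce
  then have "z = 0" using coord_expansion[OF \<open>z \<in> F i\<close>] by simp
  then show ?case
    using F_zero dF_zero by (auto simp: basis_support_def coord_zero intro!: bexI[of _ 0])
next
  case (Suc k)
  obtain y where y: "y \<in> F (i + 1)" "\<forall>e\<in>basis_support (i + 1) y. dg e \<le> m"
    and lower: "\<forall>e\<in>basis_support i (z - dF y). dg e < m"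
    by (rule cycle_top_reduction[OF exact Suc.prems])
  have "k = nat (m - 1 - lb + 1)" using Suc.hyps(2) by simp
  moreover have "z - dF y \<in> F i" "dF (z - dF y) = 0"
    using F_diff[OF \<open>z \<in> F i\<close>] dF_diff[OF \<open>z \<in> F i\<close>] dF_in[OF y(1)] dF_dF[OF y(1)]
      \<open>dF z = 0\<close> by simp_all
  moreover have "\<forall>e\<in>basis_support i (z - dF y). dg e \<le> m - 1" "s + (m - 1) < i"
    using lower \<open>s + m < i\<close> by fastforce+
  ultimately obtain w where w: "w \<in> F (i + 1)" "\<forall>e\<in>basis_support (i + 1) w. dg e \<le> m - 1"
    "dF w = z - dF y"
    using Suc.hyps(1) by blast
  have "dg e \<le> m" if "e \<in> basis_support (i + 1) (y + w)" for e
  proof -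
    have "e \<in> basis_support (i + 1) y \<or> e \<in> basis_support (i + 1) w"
      using that coord_add[OF y(1) w(1)] unfolding basis_support_def by auto
    then show ?thesis using y(2) w(2) by fastforce
  qed
  moreover have "dF (y + w) = z"
    using dF_add[OF y(1) w(1)] w(3) by simp
  ultimately show ?case using F_add[OF y(1) w(1)] by blast
qed

lemma low_part_iff:
  "x \<in> low_part A sm E dg r n \<longleftrightarrow> x \<in> F n \<and> (\<forall>e\<in>basis_support n x. dg e \<le> r)"
proof
  assume "x \<in> low_part A sm E dg r n"
  then obtain S c where S: "finite S" "S \<subseteq> E" "\<forall>e\<in>S. dg e \<le> r"
    and c: "\<forall>e\<in>S. c e \<in> A (n - dg e)" and x: "x = (\<Sum>e\<in>S. sm (c e) e)"
    unfolding low_part_def by blast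
  show "x \<in> F n \<and> (\<forall>e\<in>basis_support n x. dg e \<le> r)"
    using lincomb_in[OF S(1,2)] coord_lincomb[OF S(1,2)] c S(3)
    unfolding x basis_support_def by auto
next
  assume x: "x \<in> F n \<and> (\<forall>e\<in>basis_support n x. dg e \<le> r)"
  then show "x \<in> low_part A sm E dg r n"
    unfolding low_part_def
    using coord_in basis_support_subset[of x n] finite_basis_support coord_expansion
    by (intro CollectI exI[of _ "basis_support n x"] exI[of _ "coord n x"]) auto
qed

lemma zero_in_syzygy: "0 \<in> syzygy A F dF sm E dg r n"
  using F_zero dF_zero
  by (auto simp: syzygy_def trunc_proj_zero_def low_part_iff basis_support_def coord_zero
      intro!: image_eqI[of 0 dF 0])

lemma syzygy_hom_degrees_ge:
  assumes i: "i \<in> hom_degrees (syzygy A F dF sm E dg r) dF"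
  shows "r \<le> i"
proof (rule ccontr)
  assume "\<not> r \<le> i"
  then have "cycles (syzygy A F dF sm E dg r) dF i \<subseteq> {0}"
    unfolding cycles_def syzygy_def trunc_proj_zero_def by auto
  moreover have "0 \<in> boundaries (syzygy A F dF sm E dg r) dF i"
    unfolding boundaries_def using zero_in_syzygy dF_zero by force
  ultimately show False
    using i unfolding hom_degrees_def homology_nonzero_def by auto
qed

lemma syzygy_hom_degrees_le:
  assumes exact: "\<forall>j>s. j \<notin> hom_degrees A d" and lb: "\<forall>e\<in>E. lb \<le> dg e"
    and i: "i \<in> hom_degrees (syzygy A F dF sm E dg r) dF"
  shows "i \<le> s + r"
proof (rule ccontr)
  assume "\<not> i \<le> s + r"
  obtain x where x: "x \<in> cycles (syzygy A F dF sm E dg r) dF i"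
    "x \<notin> boundaries (syzygy A F dF sm E dg r) dF i"
    using i unfolding hom_degrees_def homology_nonzero_def by auto
  then have "x \<in> F i" "dF x = 0" "\<forall>e\<in>basis_support i x. dg e \<le> r"
    unfolding cycles_def syzygy_def low_part_iff by auto
  then obtain w where w: "w \<in> F (i + 1)" "\<forall>e\<in>basis_support (i + 1) w. dg e \<le> r" "dF w = x"
    using low_cycle_is_low_boundary[OF exact lb] \<open>\<not> i \<le> s + r\<close> by fastforce
  have "r \<le> i" by (rule syzygy_hom_degrees_ge[OF i])
  then have "w \<in> syzygy A F dF sm E dg r (i + 1)"
    unfolding syzygy_def trunc_proj_zero_def low_part_iff using w by auto
  then have "x \<in> boundaries (syzygy A F dF sm E dg r) dF i"
    unfolding boundaries_def using w(3) by force
  with x(2) show False ..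
qed

end

theorem lemma4p3:
  fixes A :: "int \<Rightarrow> 'a::ring_1 set" and d :: "'a \<Rightarrow> 'a"
    and K :: "int \<Rightarrow> 'k::ab_group_add set" and dK :: "'k \<Rightarrow> 'k" and smK :: "'a \<Rightarrow> 'k \<Rightarrow> 'k"
    and F :: "int \<Rightarrow> 'f::ab_group_add set" and dF :: "'f \<Rightarrow> 'f" and smF :: "'a \<Rightarrow> 'f \<Rightarrow> 'f"
    and E :: "'f set" and dg :: "'f \<Rightarrow> int" and \<phi> :: "'f \<Rightarrow> 'k"
    and s r :: int
  assumes A_local: "local_dg_algebra A d"
    and A_bounded: "finite (hom_degrees A d)"
    and A_nonzero: "hom_degrees A d \<noteq> {}"
    and s_def: "s = Max (hom_degrees A d) - Min (hom_degrees A d)"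
    and K_mod: "dg_module A d K dK smK"
    and K_fin: "homologically_finite A K dK smK"
    and K_amp: "\<forall>i\<in>hom_degrees K dK. \<forall>j\<in>hom_degrees K dK. i - j \<le> s"
    and r_ge: "\<forall>i\<in>hom_degrees K dK. i \<le> r"
    and F_mod: "dg_module A d F dF smF"
    and F_min: "minimal_semifree A F dF smF E dg"
    and F_res: "quasi_iso A F dF smF K dK smK \<phi>"
  shows "(\<forall>i\<in>hom_degrees (syzygy A F dF smF E dg r) dF. i \<le> s + r) \<and>
         (\<forall>i\<in>hom_degrees (syzygy A F dF smF E dg r) dF. r \<le> i) \<and>
         (\<forall>i\<in>hom_degrees (syzygy A F dF smF E dg r) dF.
            \<forall>j\<in>hom_degrees (syzygy A F dF smF E dg r) dF. i - j \<le> s)"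
proof -
  have "s = Max (hom_degrees A d)"
    using s_def local_dg_algebra_Min_hom_degrees[OF A_local A_bounded] by simp
  then have exact: "\<forall>j>s. j \<notin> hom_degrees A d"
    using A_bounded by (auto dest: Max_ge)
  obtain lb where lb: "\<forall>e\<in>E. lb \<le> dg e"
    using F_min unfolding minimal_semifree_def by blast
  interpret semifree_dg_module A d F dF smF E dg
    using A_local F_mod F_min
    by unfold_locales (auto simp: local_dg_algebra_def minimal_semifree_def)
  show ?thesis
    using syzygy_hom_degrees_le[OF exact lb] syzygy_hom_degrees_ge by fastforce
qed

end
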